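(* Let $p$ be an odd prime and $n = 2p$. Then the total graph $T(\Gamma(\mathbb{Z}_n))$ is not very cost effective.
   Context: $\mathbb{Z}_n$ is the ring of residue classes modulo $n$. The zero-divisor graph $\Gamma(\mathbb{Z}_n)$ has as vertices the nonzero zero-divisors of $\mathbb{Z}_n$, two distinct vertices being adjacent iff their product is $0$. The total graph $T(G)$ of a graph $G$ has vertex set $V(G)\cup E(G)$, with two vertices adjacent iff they are adjacent vertices of $G$, adjacent edges of $G$ (sharing an endpoint), or a vertex and an edge of $G$ incident to each other. For a graph $H=(V,E)$ and $S\subseteq V$, a vertex $v\in S$ is very cost effective if $|N(v)\cap S| < |N(v)\cap (V\setminus S)|$; $S$ is very cost effective if every vertex of $S$ is. A bipartition $\{S, V\setminus S\}$ is very cost effective if both parts are very cost effective, and $H$ is very cost effective if it has a very cost effective bipartition. *)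

theory Defs
  imports Main "HOL-Computational_Algebra.Primes"
begin

text \<open>Zero-divisor graph of Z_n: residues represented by 0..n-1.
  Vertices: nonzero zero-divisors; edges: 2-element sets {x,y}, x \<noteq> y, x*y = 0 in Z_n.\<close>

definition zd_verts :: "nat \<Rightarrow> nat set" where
  "zd_verts n = {x. 0 < x \<and> x < n \<and> (\<exists>y. 0 < y \<and> y < n \<and> (x * y) mod n = 0)}"

definition zd_edges :: "nat \<Rightarrow> nat set set" where
  "zd_edges n = {{x, y} | x y. x \<in> zd_verts n \<and> y \<in> zd_verts n \<and> x \<noteq> y \<and> (x * y) mod n = 0}"

text \<open>Total graph of a simple graph (V, E), E a set of 2-element subsets of V.
  Vertices: Inl v for v \<in> V, Inr e for e \<in> E.\<close>

definition total_verts :: "'a set \<Rightarrow> 'a set set \<Rightarrow> ('a + 'a set) set" where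
  "total_verts V E = Inl ` V \<union> Inr ` E"

fun total_rel :: "'a set set \<Rightarrow> ('a + 'a set) \<Rightarrow> ('a + 'a set) \<Rightarrow> bool" where
  "total_rel E (Inl u) (Inl v) = ({u, v} \<in> E)"
| "total_rel E (Inr e) (Inr f) = (e \<inter> f \<noteq> {})"
| "total_rel E (Inl u) (Inr e) = (u \<in> e)"
| "total_rel E (Inr e) (Inl u) = (u \<in> e)"

definition total_adj :: "'a set \<Rightarrow> 'a set set \<Rightarrow> ('a + 'a set) \<Rightarrow> ('a + 'a set) \<Rightarrow> bool" where
  "total_adj V E a b = (a \<in> total_verts V E \<and> b \<in> total_verts V E \<and> a \<noteq> b \<and> total_rel E a b)"

definition nbhd :: "'b set \<Rightarrow> ('b \<Rightarrow> 'b \<Rightarrow> bool) \<Rightarrow> 'b \<Rightarrow> 'b set" where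
  "nbhd W adj v = {w \<in> W. adj v w}"

definition very_cost_effective_set :: "'b set \<Rightarrow> ('b \<Rightarrow> 'b \<Rightarrow> bool) \<Rightarrow> 'b set \<Rightarrow> bool" where
  "very_cost_effective_set W adj S =
     (\<forall>v \<in> S. card (nbhd W adj v \<inter> S) < card (nbhd W adj v \<inter> (W - S)))"

definition very_cost_effective_graph :: "'b set \<Rightarrow> ('b \<Rightarrow> 'b \<Rightarrow> bool) \<Rightarrow> bool" where
  "very_cost_effective_graph W adj =
     (\<exists>S. S \<subseteq> W \<and> S \<noteq> {} \<and> W - S \<noteq> {} \<and>
          very_cost_effective_set W adj S \<and> very_cost_effective_set W adj (W - S))"

end

theory Submission
  imports Defs
begin

text \<open>For a prime \<open>p\<close>, a product is divisible by \<open>2p\<close> only if one factor is \<open>p\<close> (the only multiple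
  of \<open>p\<close> in \<open>{1..<2p}\<close>) and the other is even, so \<open>\<Gamma>(\<int>\<^sub>2\<^sub>p)\<close> is the star with centre \<open>p\<close> and the even
  residues as leaves. In the total graph of a star with centre \<open>c\<close>, a leaf \<open>l\<close> has exactly the two
  neighbours \<open>c\<close> and the spoke \<open>{c,l}\<close>. So in a very cost effective bipartition the side \<open>T\<close> of \<open>c\<close>
  contains no leaf and, looking at the leaves from the other side, every spoke. Then \<open>c\<close> has all its
  spokes in \<open>T\<close> but at most as many leaves outside, which contradicts the strict inequality at \<open>c\<close>.\<close>

lemma dvd_less_double_eq:
  fixes p x :: nat
  assumes "p dvd x" "0 < x" "x < 2 * p"
  shows "x = p"
proof -
  obtain k where x: "x = p * k" using assms(1) by (auto elim: dvdE)
  with assms(2,3) have "0 < k" "k < 2" by auto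
  then show ?thesis using x by simp
qed

lemma zd_verts_double_prime:
  fixes p :: nat
  assumes "prime p"
  shows "zd_verts (2 * p) = {x. 0 < x \<and> x < 2 * p \<and> (even x \<or> x = p)}"
proof (intro set_eqI iffI)
  fix x assume "x \<in> zd_verts (2 * p)"
  then obtain y where x: "0 < x" "x < 2 * p" and y: "0 < y" "y < 2 * p"
    and dvd: "2 * p dvd x * y"
    by (auto simp: zd_verts_def mod_eq_0_iff_dvd)
  then have "p dvd x \<or> p dvd y"
    using assms dvd_mult_right prime_dvd_mult_iff by blast
  then have "x = p \<or> y = p" using x y dvd_less_double_eq by blast
  moreover have "even x" if "y = p"
    using dvd that prime_gt_0_nat[OF assms] by simp
  ultimately show "x \<in> {x. 0 < x \<and> x < 2 * p \<and> (even x \<or> x = p)}" using x by auto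
next
  fix x assume "x \<in> {x. 0 < x \<and> x < 2 * p \<and> (even x \<or> x = p)}"
  then have x: "0 < x" "x < 2 * p" "even x \<or> x = p" by auto
  have "1 < p" using assms prime_gt_1_nat by blast
  show "x \<in> zd_verts (2 * p)"
  proof (cases "x = p")
    case True
    with x \<open>1 < p\<close> show ?thesis unfolding zd_verts_def by (auto intro!: exI[of _ 2])
  next
    case False
    with x obtain k where "x = 2 * k" by (auto elim: evenE)
    then have "(x * p) mod (2 * p) = 0" by simp
    with x \<open>1 < p\<close> show ?thesis unfolding zd_verts_def by (auto intro!: exI[of _ p])
  qed
qed

lemma zd_edges_double_prime:
  fixes p :: nat
  assumes "prime p"
  shows "zd_edges (2 * p) = (\<lambda>l. {p, l}) ` (zd_verts (2 * p) - {p})"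
proof (intro set_eqI iffI)
  fix e assume "e \<in> zd_edges (2 * p)"
  then obtain x y where e: "e = {x, y}" and V: "x \<in> zd_verts (2 * p)" "y \<in> zd_verts (2 * p)"
    and "x \<noteq> y" and dvd: "2 * p dvd x * y"
    by (auto simp: zd_edges_def mod_eq_0_iff_dvd)
  have "p dvd x \<or> p dvd y"
    using dvd assms dvd_mult_right prime_dvd_mult_iff by blast
  then have "x = p \<or> y = p"
    using V dvd_less_double_eq unfolding zd_verts_double_prime[OF assms] by blast
  then show "e \<in> (\<lambda>l. {p, l}) ` (zd_verts (2 * p) - {p})"
  proof
    assume "x = p"
    with V \<open>x \<noteq> y\<close> have "y \<in> zd_verts (2 * p) - {p}" by simp
    then show ?thesis by (rule rev_image_eqI) (simp add: e \<open>x = p\<close>)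
  next
    assume "y = p"
    with V \<open>x \<noteq> y\<close> have "x \<in> zd_verts (2 * p) - {p}" by simp
    moreover have "e = {p, x}" unfolding e \<open>y = p\<close> by (rule insert_commute)
    ultimately show ?thesis by (rule rev_image_eqI)
  qed
next
  fix e assume "e \<in> (\<lambda>l. {p, l}) ` (zd_verts (2 * p) - {p})"
  then obtain l where e: "e = {p, l}" and l: "l \<in> zd_verts (2 * p)" "l \<noteq> p" by blast
  have "0 < p" using assms prime_gt_0_nat by blast
  have "even l" using l by (simp add: zd_verts_double_prime[OF assms])
  then obtain k where "l = 2 * k" by (rule evenE)
  then have "(p * l) mod (2 * p) = 0" by simp
  moreover have "p \<in> zd_verts (2 * p)" using \<open>0 < p\<close> by (simp add: zd_verts_double_prime[OF assms])
  ultimately show "e \<in> zd_edges (2 * p)"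
    unfolding zd_edges_def using e l by (intro CollectI exI[of _ p] exI[of _ l]) simp
qed

lemma nbhd_total_star_leaf:
  assumes E: "E = (\<lambda>l. {c, l}) ` (V - {c})" and "c \<in> V" "l \<in> V" "l \<noteq> c"
  shows "nbhd (total_verts V E) (total_adj V E) (Inl l) = {Inl c, Inr {c, l}}"
proof (intro set_eqI iffI)
  fix w assume "w \<in> nbhd (total_verts V E) (total_adj V E) (Inl l)"
  then have w: "w \<in> total_verts V E" "w \<noteq> Inl l" "total_rel E (Inl l) w"
    by (auto simp: nbhd_def total_adj_def)
  show "w \<in> {Inl c, Inr {c, l}}"
  proof (cases w)
    case (Inl u)
    with w E assms(4) show ?thesis by (auto simp: doubleton_eq_iff)
  next
    case (Inr e)
    with w E assms(4) show ?thesis by (auto simp: total_verts_def)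
  qed
qed (use assms in \<open>auto simp: nbhd_def total_adj_def total_verts_def\<close>)

lemma nbhd_total_star_centre:
  assumes E: "E = (\<lambda>l. {c, l}) ` (V - {c})" and "c \<in> V"
  shows "nbhd (total_verts V E) (total_adj V E) (Inl c) = Inl ` (V - {c}) \<union> Inr ` E"
  using assms by (auto simp: nbhd_def total_adj_def total_verts_def doubleton_eq_iff)

lemma total_star_centre_side_contradiction:
  assumes fin: "finite V" and "c \<in> V" and E: "E = (\<lambda>l. {c, l}) ` (V - {c})"
    and T: "T \<subseteq> total_verts V E" "Inl c \<in> T"
    and vce: "very_cost_effective_set (total_verts V E) (total_adj V E) T"
    and vce_compl: "very_cost_effective_set (total_verts V E) (total_adj V E) (total_verts V E - T)"
  shows False
proof -
  define W where "W = total_verts V E"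
  define N where "N = nbhd W (total_adj V E)"
  define L where "L = V - {c}"
  have vce_at: "card (N v \<inter> T) < card (N v \<inter> (W - T))" if "v \<in> T" for v
    using vce that unfolding very_cost_effective_set_def N_def W_def by blast
  have vce_compl_at: "card (N v \<inter> (W - T)) < card (N v \<inter> T)" if "v \<in> W - T" for v
  proof -
    have "W - (W - T) = T" using T by (auto simp: W_def)
    then show ?thesis using vce_compl that unfolding very_cost_effective_set_def N_def W_def by metis
  qed
  have N_leaf: "N (Inl l) = {Inl c, Inr {c, l}}" if "l \<in> L" for l
    using nbhd_total_star_leaf[OF E \<open>c \<in> V\<close>] that by (simp add: N_def W_def L_def)
  have leaf_notin: "Inl l \<notin> T" if "l \<in> L" for l
  proof
    assume "Inl l \<in> T"
    have "1 \<le> card (N (Inl l) \<inter> T)"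
      using N_leaf[OF that] T by (simp add: Suc_le_eq card_gt_0_iff)
    also have "\<dots> < card (N (Inl l) \<inter> (W - T))" using vce_at \<open>Inl l \<in> T\<close> .
    also have "\<dots> \<le> card {Inr {c, l} :: 'a + 'a set}"
      using N_leaf[OF that] T by (intro card_mono) auto
    finally show False by simp
  qed
  have spoke_in: "Inr {c, l} \<in> T" if "l \<in> L" for l
  proof (rule ccontr)
    assume "Inr {c, l} \<notin> T"
    moreover have "Inl l \<in> W - T" "Inr {c, l} \<in> W"
      using leaf_notin[OF that] that by (auto simp: W_def total_verts_def E L_def)
    ultimately have "N (Inl l) \<inter> (W - T) = {Inr {c, l}}" "N (Inl l) \<inter> T = {Inl c}"
      using N_leaf[OF that] T by auto
    with vce_compl_at[OF \<open>Inl l \<in> W - T\<close>] show False by simp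
  qed
  have N_centre: "N (Inl c) = Inl ` L \<union> Inr ` E"
    using nbhd_total_star_centre[OF E \<open>c \<in> V\<close>] by (simp add: N_def W_def L_def)
  have card_spokes: "card (Inr ` E :: ('a + 'a set) set) = card (Inl ` L :: ('a + 'a set) set)"
    by (simp add: E L_def card_image inj_on_def doubleton_eq_iff)
  have "card (Inl ` L :: ('a + 'a set) set) \<le> card (N (Inl c) \<inter> T)"
    unfolding card_spokes[symmetric]
    using spoke_in fin by (intro card_mono) (auto simp: N_centre E L_def)
  also have "\<dots> < card (N (Inl c) \<inter> (W - T))" using vce_at T(2) .
  also have "\<dots> \<le> card (Inl ` L :: ('a + 'a set) set)"
    using spoke_in fin by (intro card_mono) (auto simp: N_centre E L_def)
  finally show False by simp
qed

lemma total_star_not_very_cost_effective: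
  assumes "finite V" "c \<in> V" "E = (\<lambda>l. {c, l}) ` (V - {c})"
  shows "\<not> very_cost_effective_graph (total_verts V E) (total_adj V E)"
proof
  define W where "W = total_verts V E"
  assume "very_cost_effective_graph (total_verts V E) (total_adj V E)"
  then obtain S where S: "S \<subseteq> W"
    and vce: "very_cost_effective_set W (total_adj V E) S"
    and vce_compl: "very_cost_effective_set W (total_adj V E) (W - S)"
    unfolding very_cost_effective_graph_def W_def by blast
  have "Inl c \<in> W" using assms(2) by (simp add: W_def total_verts_def)
  then consider "Inl c \<in> S" | "Inl c \<in> W - S" by blast
  then show False
  proof cases
    case 1
    with S vce vce_compl show False
      using total_star_centre_side_contradiction[OF assms] by (simp add: W_def)
  next
    case 2
    have "W - (W - S) = S" using S by auto
    with 2 vce vce_compl show False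
      using total_star_centre_side_contradiction[OF assms, of "W - S"] by (simp add: W_def)
  qed
qed

theorem mainTheorem8:
  fixes p :: nat
  assumes "prime p" and "odd p"
  shows "\<not> very_cost_effective_graph
            (total_verts (zd_verts (2 * p)) (zd_edges (2 * p)))
            (total_adj (zd_verts (2 * p)) (zd_edges (2 * p)))"
proof (rule total_star_not_very_cost_effective)
  show "finite (zd_verts (2 * p))" by (rule finite_subset[of _ "{..<2 * p}"]) (auto simp: zd_verts_def)
  show "p \<in> zd_verts (2 * p)"
    using assms(1) prime_gt_0_nat by (simp add: zd_verts_double_prime)
  show "zd_edges (2 * p) = (\<lambda>l. {p, l}) ` (zd_verts (2 * p) - {p})"
    using assms(1) by (rule zd_edges_double_prime)
qed

end
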